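(* The topological realization $|\mathbb G|$ of the projective Fraïssé limit $\mathbb G$ of the class $\mathcal G$ of finite connected graphs with confluent epimorphisms is a Kelley continuum.
   Context: A graph is a pair $A=(V(A),E(A))$ with $E(A)\subseteq V(A)^2$ reflexive and symmetric. A topological graph is a graph whose vertex set is a compact, second countable, zero-dimensional space and whose edge set is closed. A homomorphism maps edges to edges; an epimorphism is a (continuous) homomorphism surjective on vertices and on edges. A subset $S$ of the vertex set is disconnected if there are nonempty closed subsets $P,Q$ of $S$ with $P\cup Q=S$ and no edge between $P$ and $Q$; otherwise connected; components are maximal connected subsets. An epimorphism $f\colon A\to B$ is confluent if for every connected $Q\subseteq V(B)$ and every component $C$ of $f^{-1}(Q)$, $f(C)=Q$. $\mathcal G$ is the class of finite connected graphs with confluent epimorphisms (a projective Fraïssé class), and $\mathbb G$ is its projective Fraïssé limit: the unique topological graph such that (1) every $A\in\mathcal G$ is the image of a confluent epimorphism from $\mathbb G$; (2) for $A,B\in\mathcal G$ and confluent epimorphisms $f\colon\mathbb G\to A$, $g\colon B\to A$ there is a confluent epimorphism $h\colon\mathbb G\to B$ with $f=g\circ h$; (3) for every $\varepsilon>0$ there is a confluent epimorphism from $\mathbb G$ onto some $A\in\mathcal G$ whose point-preimages have diameter $<\varepsilon$. The edge relation of $\mathbb G$ is an equivalence relation, and the topological realization $|\mathbb G|$ is the quotient space $V(\mathbb G)/E(\mathbb G)$. A continuum $X$ is Kelley if for every subcontinuum $K$, every $p\in K$ and every sequence $p_n\to p$ in $X$ there are subcontinua $K_n\ni p_n$ with $K_n\to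 K$ in the Hausdorff metric. *)

theory Defs
  imports "HOL-Analysis.Analysis"
begin

text \<open>A (topological) graph is given by a topology T (vertex set = topspace T)
  and an edge set E.  Finite graphs carry the discrete topology.\<close>

definition graph :: "'a set \<Rightarrow> ('a \<times> 'a) set \<Rightarrow> bool" where
  "graph V E \<longleftrightarrow> E \<subseteq> V \<times> V \<and> (\<forall>x\<in>V. (x, x) \<in> E) \<and> (\<forall>x y. (x, y) \<in> E \<longrightarrow> (y, x) \<in> E)"

definition gdisconnected :: "'a topology \<Rightarrow> ('a \<times> 'a) set \<Rightarrow> 'a set \<Rightarrow> bool" where
  "gdisconnected T E S \<longleftrightarrow>
     (\<exists>P Q. P \<noteq> {} \<and> Q \<noteq> {} \<and> closedin (subtopology T S) P \<and> closedin (subtopology T S) Q \<and>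
            P \<union> Q = S \<and> (\<forall>p\<in>P. \<forall>q\<in>Q. (p, q) \<notin> E))"

definition gconnected :: "'a topology \<Rightarrow> ('a \<times> 'a) set \<Rightarrow> 'a set \<Rightarrow> bool" where
  "gconnected T E S \<longleftrightarrow> S \<subseteq> topspace T \<and> \<not> gdisconnected T E S"

definition gcomponent :: "'a topology \<Rightarrow> ('a \<times> 'a) set \<Rightarrow> 'a set \<Rightarrow> 'a set \<Rightarrow> bool" where
  "gcomponent T E X C \<longleftrightarrow> C \<subseteq> X \<and> gconnected T E C \<and>
     (\<forall>C'. C \<subseteq> C' \<and> C' \<subseteq> X \<and> gconnected T E C' \<longrightarrow> C' = C)"

definition epimorphism :: "'a topology \<Rightarrow> ('a \<times> 'a) set \<Rightarrow> 'b topology \<Rightarrow> ('b \<times> 'b) set \<Rightarrow> ('a \<Rightarrow> 'b) \<Rightarrow> bool" where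
  "epimorphism T1 E1 T2 E2 f \<longleftrightarrow>
     continuous_map T1 T2 f \<and>
     (\<forall>x y. (x, y) \<in> E1 \<longrightarrow> (f x, f y) \<in> E2) \<and>
     f ` topspace T1 = topspace T2 \<and>
     (\<forall>a b. (a, b) \<in> E2 \<longrightarrow> (\<exists>x y. (x, y) \<in> E1 \<and> f x = a \<and> f y = b))"

definition confluent :: "'a topology \<Rightarrow> ('a \<times> 'a) set \<Rightarrow> 'b topology \<Rightarrow> ('b \<times> 'b) set \<Rightarrow> ('a \<Rightarrow> 'b) \<Rightarrow> bool" where
  "confluent T1 E1 T2 E2 f \<longleftrightarrow> epimorphism T1 E1 T2 E2 f \<and>
     (\<forall>Q C. gconnected T2 E2 Q \<and> gcomponent T1 E1 {x \<in> topspace T1. f x \<in> Q} C \<longrightarrow> f ` C = Q)"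

text \<open>The class \<G>: finite nonempty connected graphs; w.l.o.g. with vertices in nat
  (every finite graph is isomorphic to one of these, and all notions are isomorphism invariant).\<close>
definition in_G :: "nat set \<Rightarrow> (nat \<times> nat) set \<Rightarrow> bool" where
  "in_G V E \<longleftrightarrow> finite V \<and> V \<noteq> {} \<and> graph V E \<and> gconnected (discrete_topology V) E V"

definition mdiam :: "('a \<Rightarrow> 'a \<Rightarrow> real) \<Rightarrow> 'a set \<Rightarrow> real" where
  "mdiam d S = (if S = {} then 0 else Sup {d x y |x y. x \<in> S \<and> y \<in> S})"

text \<open>A topological graph: vertex space compact, second countable, zero-dimensional,
  here given through a compatible metric d on M (needed to speak of diameters in (3));
  edge set closed.\<close>
definition topological_graph :: "'a set \<Rightarrow> ('a \<Rightarrow> 'a \<Rightarrow> real) \<Rightarrow> ('a \<times> 'a) set \<Rightarrow> bool" where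
  "topological_graph M d E \<longleftrightarrow>
     Metric_space M d \<and>
     compact_space (Metric_space.mtopology M d) \<and>
     second_countable (Metric_space.mtopology M d) \<and>
     (\<forall>U x. openin (Metric_space.mtopology M d) U \<and> x \<in> U \<longrightarrow>
        (\<exists>W. openin (Metric_space.mtopology M d) W \<and> closedin (Metric_space.mtopology M d) W \<and> x \<in> W \<and> W \<subseteq> U)) \<and>
     graph M E \<and>
     closedin (prod_topology (Metric_space.mtopology M d) (Metric_space.mtopology M d)) E"

definition fraisse_limit_G :: "'a set \<Rightarrow> ('a \<Rightarrow> 'a \<Rightarrow> real) \<Rightarrow> ('a \<times> 'a) set \<Rightarrow> bool" where
  "fraisse_limit_G M d E \<longleftrightarrow>
     topological_graph M d E \<and>
     \<comment> \<open>(1) projective universality\<close>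
     (\<forall>VA EA. in_G VA EA \<longrightarrow>
        (\<exists>f. confluent (Metric_space.mtopology M d) E (discrete_topology VA) EA f)) \<and>
     \<comment> \<open>(2) projective extension property\<close>
     (\<forall>VA EA VB EB f g. in_G VA EA \<and> in_G VB EB \<and>
        confluent (Metric_space.mtopology M d) E (discrete_topology VA) EA f \<and>
        confluent (discrete_topology VB) EB (discrete_topology VA) EA g \<longrightarrow>
        (\<exists>h. confluent (Metric_space.mtopology M d) E (discrete_topology VB) EB h \<and>
             (\<forall>x\<in>M. f x = g (h x)))) \<and>
     \<comment> \<open>(3) fine approximations\<close>
     (\<forall>\<epsilon>>0. \<exists>VA EA f. in_G VA EA \<and>
        confluent (Metric_space.mtopology M d) E (discrete_topology VA) EA f \<and>
        (\<forall>a\<in>VA. mdiam d {x \<in> M. f x = a} < \<epsilon>))"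

definition eclass :: "'a set \<Rightarrow> ('a \<times> 'a) set \<Rightarrow> 'a \<Rightarrow> 'a set" where
  "eclass V E x = {y \<in> V. (x, y) \<in> E}"

text \<open>Quotient topology of V(G)/E(G) (E(G) is an equivalence relation): U is open iff
  its preimage under the class map is open.\<close>
definition realization_open :: "'a topology \<Rightarrow> ('a \<times> 'a) set \<Rightarrow> 'a set set \<Rightarrow> bool" where
  "realization_open T E U \<longleftrightarrow> U \<subseteq> eclass (topspace T) E ` topspace T \<and>
      openin T {x \<in> topspace T. eclass (topspace T) E x \<in> U}"

definition realization :: "'a topology \<Rightarrow> ('a \<times> 'a) set \<Rightarrow> 'a set topology" where
  "realization T E = topology (realization_open T E)"

lemma istopology_realization: "istopology (realization_open T E)"
proof -
  let ?q = "eclass (topspace T) E"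
  have 1: "realization_open T E (S \<inter> U)"
    if "realization_open T E S" "realization_open T E U" for S U
  proof -
    have "{x \<in> topspace T. ?q x \<in> S \<inter> U} =
      {x \<in> topspace T. ?q x \<in> S} \<inter> {x \<in> topspace T. ?q x \<in> U}" by auto
    moreover have "openin T ({x \<in> topspace T. ?q x \<in> S} \<inter> {x \<in> topspace T. ?q x \<in> U})"
      using that unfolding realization_open_def by (intro openin_Int) auto
    ultimately show ?thesis using that unfolding realization_open_def by auto
  qed
  have 2: "realization_open T E (\<Union>K)"
    if "\<forall>U\<in>K. realization_open T E U" for K
  proof -
    have "{x \<in> topspace T. ?q x \<in> \<Union>K} = \<Union>((\<lambda>U. {x \<in> topspace T. ?q x \<in> U}) ` K)" by auto
    moreover have "openin T (\<Union>((\<lambda>U. {x \<in> topspace T. ?q x \<in> U}) ` K))"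
      using that unfolding realization_open_def by (intro openin_Union) auto
    ultimately show ?thesis using that unfolding realization_open_def by auto
  qed
  show ?thesis unfolding istopology_def using 1 2 by auto
qed

lemma openin_realization: "openin (realization T E) U \<longleftrightarrow> realization_open T E U"
  unfolding realization_def using istopology_realization[of T E] by simp

definition hausdist_m :: "('a \<Rightarrow> 'a \<Rightarrow> real) \<Rightarrow> 'a set \<Rightarrow> 'a set \<Rightarrow> real" where
  "hausdist_m d A B = max (SUP a\<in>A. INF b\<in>B. d a b) (SUP b\<in>B. INF a\<in>A. d a b)"

definition subcontinuum :: "'a topology \<Rightarrow> 'a set \<Rightarrow> bool" where
  "subcontinuum X K \<longleftrightarrow> K \<noteq> {} \<and> compactin X K \<and> connectedin X K"

definition continuum :: "'a topology \<Rightarrow> bool" where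
  "continuum X \<longleftrightarrow> topspace X \<noteq> {} \<and> compact_space X \<and> connected_space X \<and> metrizable_space X"

text \<open>Kelley property, with respect to every metric compatible with the topology
  (the property does not depend on the choice of the metric).\<close>
definition kelley_continuum :: "'a topology \<Rightarrow> bool" where
  "kelley_continuum X \<longleftrightarrow> continuum X \<and>
     (\<forall>d. Metric_space (topspace X) d \<and> Metric_space.mtopology (topspace X) d = X \<longrightarrow>
        (\<forall>K p pn. subcontinuum X K \<and> p \<in> K \<and> range pn \<subseteq> topspace X \<and> limitin X pn p sequentially \<longrightarrow>
           (\<exists>Kn. (\<forall>n. subcontinuum X (Kn n) \<and> pn n \<in> Kn n) \<and>
                 (\<lambda>n. hausdist_m d (Kn n) K) \<longlonglongrightarrow> 0)))"

end

theory Submission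
  imports Defs
begin

(* The edge relation E of the Fraisse limit is closed, and it is transitive: a vertex of the
   subdivision of a finite graph has neighbours over at most one vertex other than its own, so
   lifting a fine confluent map through the subdivision separates any x E y E z with (x, z) not
   in E. Hence the realization is the quotient of a compact metric space by a closed equivalence
   relation: a compact, Hausdorff, second countable and so metrizable space. It is connected
   because the limit has arbitrarily fine confluent images onto connected finite graphs.

   For the Kelley property let K be a subcontinuum, K' its preimage, and f a confluent map onto a
   finite graph whose fibres are small enough to have diameter at most e in the realization. The
   preimage W of Q = f(K') is clopen, and the points of the realization all of whose preimages
   lie in W form a neighbourhood of p. For p_n in this neighbourhood, the component of W through
   a preimage of p_n is mapped onto Q by confluence, so its image is a subcontinuum containing p_n
   within Hausdorff distance e of K. *)

section \<open>Metrizability\<close>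

lemma metrizable_space_if_separating_real_maps:
  fixes g :: "'i \<Rightarrow> 'a \<Rightarrow> real"
  assumes "compact_space X" and "countable I"
    and cont: "\<And>i. i \<in> I \<Longrightarrow> continuous_map X euclideanreal (g i)"
    and sep: "\<And>u v. \<lbrakk>u \<in> topspace X; v \<in> topspace X; u \<noteq> v\<rbrakk> \<Longrightarrow> \<exists>i\<in>I. g i u \<noteq> g i v"
  shows "metrizable_space X"
proof -
  let ?P = "product_topology (\<lambda>_. euclideanreal) I"
  define \<Phi> where "\<Phi> u = (\<lambda>i\<in>I. g i u)" for u
  have cont\<Phi>: "continuous_map X ?P \<Phi>"
    using cont by (auto simp: continuous_map_componentwise \<Phi>_def)
  have "inj_on \<Phi> (topspace X)"
    by (rule inj_onI) (metis sep \<Phi>_def restrict_apply')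
  moreover have "closed_map X ?P \<Phi>"
    using continuous_imp_closed_map[OF cont\<Phi> \<open>compact_space X\<close>]
    by (simp add: Hausdorff_space_product_topology)
  ultimately have "X homeomorphic_space subtopology ?P (\<Phi> ` topspace X)"
    using cont\<Phi> injective_closed_imp_embedding_map embedding_map_imp_homeomorphic_space by blast
  moreover have "metrizable_space ?P"
    using \<open>countable I\<close>
    by (intro metrizable_topology_D) (auto simp: PiE_eq_empty_iff metrizable_space_euclidean
        intro: countable_subset)
  ultimately show ?thesis
    using homeomorphic_metrizable_space metrizable_space_subtopology by blast
qed

lemma regular_space_basis_nested_closure:
  assumes "regular_space X" and \<B>: "\<And>V. V \<in> \<B> \<Longrightarrow> openin X V"
    "\<And>U x. \<lbrakk>openin X U; x \<in> U\<rbrakk> \<Longrightarrow> \<exists>V\<in>\<B>. x \<in> V \<and> V \<subseteq> U"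
    and "openin X U" "u \<in> U"
  obtains B\<^sub>1 B\<^sub>2 where "B\<^sub>1 \<in> \<B>" "B\<^sub>2 \<in> \<B>" "u \<in> B\<^sub>1" "X closure_of B\<^sub>1 \<subseteq> B\<^sub>2" "B\<^sub>2 \<subseteq> U"
proof -
  obtain B\<^sub>2 where B\<^sub>2: "B\<^sub>2 \<in> \<B>" "u \<in> B\<^sub>2" "B\<^sub>2 \<subseteq> U"
    using \<B>(2) assms(4,5) by blast
  have "closedin X (topspace X - B\<^sub>2)" "u \<in> topspace X - (topspace X - B\<^sub>2)"
    using \<B>(1)[OF B\<^sub>2(1)] B\<^sub>2(2) openin_subset by auto
  then obtain W where W: "openin X W" "u \<in> W" "disjnt (topspace X - B\<^sub>2) (X closure_of W)"
    using \<open>regular_space X\<close> unfolding regular_space by blast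
  obtain B\<^sub>1 where B\<^sub>1: "B\<^sub>1 \<in> \<B>" "u \<in> B\<^sub>1" "B\<^sub>1 \<subseteq> W"
    using \<B>(2) W by blast
  have "X closure_of B\<^sub>1 \<subseteq> X closure_of W"
    using closure_of_mono[OF B\<^sub>1(3)] .
  also have "\<dots> \<subseteq> B\<^sub>2"
    using W(3) closure_of_subset_topspace by (fastforce simp: disjnt_def)
  finally show thesis
    using that B\<^sub>1(1,2) B\<^sub>2(1,3) by blast
qed

text \<open>Urysohn functions for the pairs \<open>B\<^sub>1, B\<^sub>2\<close> of basic open sets with
  \<open>closure B\<^sub>1 \<subseteq> B\<^sub>2\<close> separate points.\<close>
lemma separating_real_maps_if_second_countable:
  fixes X :: "'a topology"
  assumes "normal_space X" and "Hausdorff_space X" and "second_countable X"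
  obtains I :: "('a set \<times> 'a set) set" and g
  where "countable I" "\<And>i. i \<in> I \<Longrightarrow> continuous_map X euclideanreal (g i)"
    "\<And>u v. \<lbrakk>u \<in> topspace X; v \<in> topspace X; u \<noteq> v\<rbrakk> \<Longrightarrow> \<exists>i\<in>I. g i u \<noteq> g i v"
proof -
  obtain \<B> where "countable \<B>" "\<forall>V\<in>\<B>. openin X V"
    "\<forall>U x. openin X U \<and> x \<in> U \<longrightarrow> (\<exists>V\<in>\<B>. x \<in> V \<and> V \<subseteq> U)"
    using \<open>second_countable X\<close> unfolding second_countable_def by blast
  then have \<B>: "countable \<B>" "\<And>V. V \<in> \<B> \<Longrightarrow> openin X V"
    "\<And>U x. \<lbrakk>openin X U; x \<in> U\<rbrakk> \<Longrightarrow> \<exists>V\<in>\<B>. x \<in> V \<and> V \<subseteq> U"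
    by auto
  define I where "I = {(B\<^sub>1, B\<^sub>2). B\<^sub>1 \<in> \<B> \<and> B\<^sub>2 \<in> \<B> \<and> X closure_of B\<^sub>1 \<subseteq> B\<^sub>2}"
  have "\<exists>h. continuous_map X euclideanreal h \<and>
      h ` (X closure_of fst i) \<subseteq> {0} \<and> h ` (topspace X - snd i) \<subseteq> {1}" if i: "i \<in> I" for i
  proof -
    obtain B\<^sub>1 B\<^sub>2 where "i = (B\<^sub>1, B\<^sub>2)" "B\<^sub>2 \<in> \<B>" "X closure_of B\<^sub>1 \<subseteq> B\<^sub>2"
      using i unfolding I_def by blast
    then have "closedin X (topspace X - snd i)" "disjnt (X closure_of fst i) (topspace X - snd i)"
      using closedin_diff[OF closedin_topspace \<B>(2)] by (auto simp: disjnt_def)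
    then obtain h where h: "continuous_map X (top_of_set {0..1::real}) h"
      "h ` (X closure_of fst i) \<subseteq> {0}" "h ` (topspace X - snd i) \<subseteq> {1}"
      by (rule Urysohn_lemma[OF \<open>normal_space X\<close> closedin_closure_of _ _ zero_le_one])
    have "continuous_map X euclideanreal h"
      using h(1) by (simp add: continuous_map_in_subtopology)
    with h(2,3) show ?thesis
      by (intro exI[of _ h]) simp
  qed
  then obtain g where g: "\<And>i. i \<in> I \<Longrightarrow> continuous_map X euclideanreal (g i) \<and>
      g i ` (X closure_of fst i) \<subseteq> {0} \<and> g i ` (topspace X - snd i) \<subseteq> {1}"
    using bchoice[of I] by (metis (no_types, lifting))
  show thesis
  proof (rule that[of I g])
    show "countable I"
      by (rule countable_subset[of _ "\<B> \<times> \<B>"]) (auto simp: I_def \<B>(1))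
    show "continuous_map X euclideanreal (g i)" if "i \<in> I" for i
      using g that by blast
    show "\<exists>i\<in>I. g i u \<noteq> g i v" if uv: "u \<in> topspace X" "v \<in> topspace X" "u \<noteq> v" for u v
    proof -
      have "t1_space X"
        using \<open>Hausdorff_space X\<close> Hausdorff_imp_t1_space by blast
      then obtain U where U: "openin X U" "u \<in> U" "v \<notin> U"
        using uv unfolding t1_space_def by blast
      have "regular_space X"
        using assms normal_t1_imp_regular_space \<open>t1_space X\<close> by blast
      then obtain B\<^sub>1 B\<^sub>2 where B: "B\<^sub>1 \<in> \<B>" "B\<^sub>2 \<in> \<B>" "u \<in> B\<^sub>1" "X closure_of B\<^sub>1 \<subseteq> B\<^sub>2" "B\<^sub>2 \<subseteq> U"
        using regular_space_basis_nested_closure[OF _ \<B>(2,3) U(1,2)] by blast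
      then have i: "(B\<^sub>1, B\<^sub>2) \<in> I"
        by (simp add: I_def)
      have "u \<in> X closure_of B\<^sub>1"
        using closure_of_subset[OF openin_subset[OF \<B>(2)[OF B(1)]]] B(3) by blast
      then have "g (B\<^sub>1, B\<^sub>2) u = 0"
        using g[OF i] by auto
      moreover have "v \<in> topspace X - B\<^sub>2"
        using uv(2) U(3) B(5) by blast
      then have "g (B\<^sub>1, B\<^sub>2) v = 1"
        using g[OF i] by (auto simp: image_subset_iff)
      ultimately show ?thesis
        using i by force
    qed
  qed
qed

lemma metrizable_space_if_compact_Hausdorff_second_countable:
  assumes "compact_space X" "Hausdorff_space X" "second_countable X"
  shows "metrizable_space X"
proof -
  have "normal_space X"
    using assms compact_Hausdorff_or_regular_imp_normal_space by blast
  then show ?thesis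
    using assms separating_real_maps_if_second_countable metrizable_space_if_separating_real_maps
    by metis
qed

lemma compactin_subset_finite_basic_Union:
  assumes "compactin T F" and \<B>: "\<And>V. V \<in> \<B> \<Longrightarrow> openin T V"
    "\<And>U x. \<lbrakk>openin T U; x \<in> U\<rbrakk> \<Longrightarrow> \<exists>V\<in>\<B>. x \<in> V \<and> V \<subseteq> U"
    and "openin T U" "F \<subseteq> U"
  obtains \<V> where "finite \<V>" "\<V> \<subseteq> \<B>" "F \<subseteq> \<Union>\<V>" "\<Union>\<V> \<subseteq> U"
proof -
  have cover: "F \<subseteq> \<Union>{V \<in> \<B>. V \<subseteq> U}"
  proof
    fix x assume "x \<in> F"
    then obtain V where "V \<in> \<B>" "x \<in> V" "V \<subseteq> U"
      using \<B>(2) assms(4,5) by blast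
    then show "x \<in> \<Union>{V \<in> \<B>. V \<subseteq> U}"
      by blast
  qed
  have "\<And>V. V \<in> {V \<in> \<B>. V \<subseteq> U} \<Longrightarrow> openin T V"
    using \<B>(1) by simp
  from compactinD[OF \<open>compactin T F\<close> this cover]
  obtain \<V> where "finite \<V>" "\<V> \<subseteq> {V \<in> \<B>. V \<subseteq> U}" "F \<subseteq> \<Union>\<V>"
    by blast
  then show thesis
    using that by blast
qed

lemma second_countable_perfect_map_image:
  assumes f: "perfect_map T Y f" and "second_countable T"
  shows "second_countable Y"
proof -
  obtain \<B> where "countable \<B>" "\<forall>V\<in>\<B>. openin T V"
    "\<forall>U x. openin T U \<and> x \<in> U \<longrightarrow> (\<exists>V\<in>\<B>. x \<in> V \<and> V \<subseteq> U)"
    using \<open>second_countable T\<close> unfolding second_countable_def by blast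
  then have \<B>: "countable \<B>" "\<And>V. V \<in> \<B> \<Longrightarrow> openin T V"
    "\<And>U x. \<lbrakk>openin T U; x \<in> U\<rbrakk> \<Longrightarrow> \<exists>V\<in>\<B>. x \<in> V \<and> V \<subseteq> U"
    by auto
  have cont: "continuous_map T Y f" and closed: "closed_map T Y f"
    and surj: "f ` topspace T = topspace Y"
    and fibre: "\<And>y. y \<in> topspace Y \<Longrightarrow> compactin T {x \<in> topspace T. f x = y}"
    using f by (simp_all add: perfect_map_def proper_map_def)
  define N where "N \<V> = topspace Y - f ` (topspace T - \<Union>\<V>)" for \<V>
  define \<C> where "\<C> = N ` {\<V>. finite \<V> \<and> \<V> \<subseteq> \<B>}"
  show ?thesis
    unfolding second_countable_def
  proof (intro exI conjI allI impI ballI)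
    show "countable \<C>"
      unfolding \<C>_def by (intro countable_image countable_Collect_finite_subset \<B>(1))
    show "openin Y C" if C: "C \<in> \<C>" for C
    proof -
      obtain \<V> where "\<V> \<subseteq> \<B>" "C = N \<V>"
        using C unfolding \<C>_def by blast
      have "openin T (\<Union>\<V>)"
        using \<B>(2) \<open>\<V> \<subseteq> \<B>\<close> by (intro openin_Union) blast
      then have "closedin T (topspace T - \<Union>\<V>)"
        by (rule closedin_diff[OF closedin_topspace])
      then have "closedin Y (f ` (topspace T - \<Union>\<V>))"
        using closed unfolding closed_map_def by blast
      then show ?thesis
        unfolding \<open>C = N \<V>\<close> N_def by (rule openin_diff[OF openin_topspace])
    qed
    fix W y assume Wy: "openin Y W \<and> y \<in> W"
    then have "y \<in> topspace Y"
      using openin_subset by blast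
    have "openin T {x \<in> topspace T. f x \<in> W}"
      using Wy by (intro openin_continuous_map_preimage[OF cont]) simp
    moreover have "{x \<in> topspace T. f x = y} \<subseteq> {x \<in> topspace T. f x \<in> W}"
      using Wy by auto
    ultimately obtain \<V> where \<V>: "finite \<V>" "\<V> \<subseteq> \<B>" "{x \<in> topspace T. f x = y} \<subseteq> \<Union>\<V>"
      "\<Union>\<V> \<subseteq> {x \<in> topspace T. f x \<in> W}"
      using compactin_subset_finite_basic_Union[OF fibre[OF \<open>y \<in> topspace Y\<close>] \<B>(2,3)] by blast
    show "\<exists>C\<in>\<C>. y \<in> C \<and> C \<subseteq> W"
    proof (intro bexI conjI)
      show "N \<V> \<in> \<C>"
        unfolding \<C>_def using \<V>(1,2) by (intro imageI) auto
      show "y \<in> N \<V>"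
        using \<V>(3) \<open>y \<in> topspace Y\<close> unfolding N_def by auto
      show "N \<V> \<subseteq> W"
      proof
        fix w assume w: "w \<in> N \<V>"
        then have "w \<in> f ` topspace T"
          using surj unfolding N_def by blast
        then obtain x where "x \<in> topspace T" "f x = w"
          by blast
        then have "x \<in> \<Union>\<V>"
          using w unfolding N_def by auto
        then show "w \<in> W"
          using \<V>(4) \<open>f x = w\<close> by auto
      qed
    qed
  qed
qed

section \<open>Compact metric spaces\<close>

lemma (in Metric_space) mdist_bounded_below_if_disjoint_closedin:
  assumes "compact_space mtopology" "closedin mtopology P" "closedin mtopology R" "disjnt P R"
  obtains \<delta> where "\<delta> > 0" "\<And>p r. \<lbrakk>p \<in> P; r \<in> R\<rbrakk> \<Longrightarrow> \<delta> \<le> d p r"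
proof (cases "P = {} \<or> R = {}")
  case True
  then show thesis
    using that[of 1] by auto
next
  case False
  let ?D = "(\<lambda>(x, y). d x y) ` (P \<times> R)"
  have "compactin mtopology P" "compactin mtopology R"
    using assms closedin_compact_space by blast+
  then have "compactin (prod_topology mtopology mtopology) (P \<times> R)"
    by (simp add: compactin_Times)
  moreover have "continuous_map (prod_topology mtopology mtopology) euclideanreal (\<lambda>(x, y). d x y)"
    using continuous_map_metric[of "metric (M, d)"] by simp
  ultimately have "compact ?D"
    using image_compactin by fastforce
  moreover have "?D \<noteq> {}"
    using False by blast
  ultimately obtain s where "s \<in> ?D" and min: "\<forall>t\<in>?D. s \<le> t"
    using compact_attains_inf by blast
  then obtain p r where pr: "p \<in> P" "r \<in> R" "s = d p r"
    by auto
  have "P \<subseteq> M" "R \<subseteq> M"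
    using closedin_subset[OF assms(2)] closedin_subset[OF assms(3)] by simp_all
  moreover have "p \<noteq> r"
    using assms(4) pr by (auto simp: disjnt_def)
  ultimately have "d p r \<noteq> 0"
    using pr zero[of p r] by blast
  then have "d p r > 0"
    using nonneg[of p r] by linarith
  moreover have "d p r \<le> d p' r'" if "p' \<in> P" "r' \<in> R" for p' r'
  proof -
    have "d p' r' \<in> ?D"
      using that by (auto intro: image_eqI[where x="(p', r')"])
    then show ?thesis
      using min pr(3) by blast
  qed
  ultimately show thesis
    using that by blast
qed

lemma (in Metric_space) uniformly_continuous_if_compact:
  assumes "compact_space mtopology" "Metric_space M' d'"
    and "continuous_map mtopology (Metric_space.mtopology M' d') f" and "\<epsilon> > 0"
  obtains \<delta> where "\<delta> > 0" "\<And>x y. \<lbrakk>x \<in> M; y \<in> M; d x y < \<delta>\<rbrakk> \<Longrightarrow> d' (f x) (f y) < \<epsilon>"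
proof -
  interpret M': Metric_space M' d' by fact
  have "uniformly_continuous_map (metric (M, d)) (metric (M', d')) f"
    using assms by (intro continuous_imp_uniformly_continuous_map) simp
  then obtain \<delta> where "\<delta> > 0" "\<forall>x\<in>M. \<forall>y\<in>M. d y x < \<delta> \<longrightarrow> d' (f y) (f x) < \<epsilon>"
    using \<open>\<epsilon> > 0\<close> unfolding uniformly_continuous_map_def by auto
  then show thesis
    using that by blast
qed

lemma (in Metric_space) mdist_le_mdiam:
  assumes "mbounded S" "x \<in> S" "y \<in> S"
  shows "d x y \<le> mdiam d S"
proof -
  obtain c B where cB: "S \<subseteq> mcball c B"
    using \<open>mbounded S\<close> unfolding mbounded_def by blast
  have "bdd_above {d x y |x y. x \<in> S \<and> y \<in> S}"
  proof (rule bdd_aboveI)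
    fix t assume "t \<in> {d x y |x y. x \<in> S \<and> y \<in> S}"
    then obtain u v where "t = d u v" "u \<in> S" "v \<in> S"
      by blast
    moreover have "u \<in> M" "v \<in> M" "c \<in> M" "d c u \<le> B" "d c v \<le> B"
      using cB \<open>u \<in> S\<close> \<open>v \<in> S\<close> by auto
    ultimately show "t \<le> 2 * B"
      using triangle[of u c v] commute[of u c] by linarith
  qed
  then show ?thesis
    using assms by (auto simp: mdiam_def intro!: cSup_upper)
qed

lemma SUP_INF_nonneg_le:
  fixes \<rho> :: "'a \<Rightarrow> 'b \<Rightarrow> real"
  assumes "A \<noteq> {}" "B \<noteq> {}" and nonneg: "\<And>x y. 0 \<le> \<rho> x y"
    and AB: "\<And>a. a \<in> A \<Longrightarrow> \<exists>b\<in>B. \<rho> a b \<le> e"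
  shows "0 \<le> (SUP a\<in>A. INF b\<in>B. \<rho> a b) \<and> (SUP a\<in>A. INF b\<in>B. \<rho> a b) \<le> e"
proof -
  have bdd: "bdd_below (\<rho> a ` B)" for a
    using nonneg by (intro bdd_belowI2[where m=0])
  have ge: "0 \<le> (INF b\<in>B. \<rho> a b)" for a
    using \<open>B \<noteq> {}\<close> nonneg by (intro cINF_greatest)
  have le: "(INF b\<in>B. \<rho> a b) \<le> e" if "a \<in> A" for a
    using AB[OF that] bdd cINF_lower2 by metis
  obtain a where "a \<in> A"
    using \<open>A \<noteq> {}\<close> by blast
  have "bdd_above ((\<lambda>a. INF b\<in>B. \<rho> a b) ` A)"
    using le by (intro bdd_aboveI2)
  then show ?thesis
    using \<open>a \<in> A\<close> ge le \<open>A \<noteq> {}\<close> by (auto intro: cSUP_upper2 cSUP_least)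
qed

lemma hausdist_m_le:
  assumes "A \<noteq> {}" "B \<noteq> {}" and nonneg: "\<And>x y. 0 \<le> \<rho> x y"
    and "\<And>a. a \<in> A \<Longrightarrow> \<exists>b\<in>B. \<rho> a b \<le> e" and "\<And>b. b \<in> B \<Longrightarrow> \<exists>a\<in>A. \<rho> a b \<le> e"
  shows "\<bar>hausdist_m \<rho> A B\<bar> \<le> e"
  using SUP_INF_nonneg_le[of A B \<rho> e] SUP_INF_nonneg_le[of B A "\<lambda>b a. \<rho> a b" e] assms
  by (auto simp: hausdist_m_def)

text \<open>Choosing each \<open>L n\<close> within \<open>1/(n+1)\<close> of the infimum of the admissible values
  makes the choice independent of the tolerance.\<close>
lemma choice_tendsto_zero:
  fixes h :: "'b \<Rightarrow> real"
  assumes ex: "\<And>n. \<exists>L. P n L"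
    and small: "\<And>e. e > 0 \<Longrightarrow> \<forall>\<^sub>F n in sequentially. \<exists>L. P n L \<and> \<bar>h L\<bar> \<le> e"
  shows "\<exists>L. (\<forall>n. P n (L n)) \<and> (\<lambda>n. h (L n)) \<longlonglongrightarrow> 0"
proof -
  define m where "m n = Inf ((\<lambda>L. \<bar>h L\<bar>) ` {L. P n L})" for n
  have m_le: "m n \<le> \<bar>h L\<bar>" if "P n L" for n L
    unfolding m_def using that by (intro cInf_lower bdd_belowI2[where m=0]) auto
  have "\<exists>L. P n L \<and> \<bar>h L\<bar> < m n + 1 / (real n + 1)" for n
    using cInf_lessD[of "(\<lambda>L. \<bar>h L\<bar>) ` {L. P n L}" "m n + 1 / (real n + 1)"] ex[of n]
    unfolding m_def by fastforce
  then obtain L where L: "\<And>n. P n (L n)" "\<And>n. \<bar>h (L n)\<bar> < m n + 1 / (real n + 1)"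
    by metis
  have "(\<lambda>n. h (L n)) \<longlonglongrightarrow> 0"
  proof (rule LIMSEQ_I)
    fix r :: real assume "r > 0"
    obtain N1 where N1: "\<And>n. n \<ge> N1 \<Longrightarrow> \<exists>L. P n L \<and> \<bar>h L\<bar> \<le> r / 2"
      using small[of "r / 2"] \<open>r > 0\<close> by (auto simp: eventually_sequentially)
    obtain N2 :: nat where N2: "1 / (real N2 + 1) < r / 2"
      using \<open>r > 0\<close> reals_Archimedean[of "r / 2"] by (auto simp: field_simps)
    have "\<bar>h (L n)\<bar> < r" if n: "n \<ge> max N1 N2" for n
    proof -
      obtain L' where "P n L'" "\<bar>h L'\<bar> \<le> r / 2"
        using N1 n by auto
      moreover have "1 / (real n + 1) \<le> 1 / (real N2 + 1)"
        using n by (intro divide_left_mono) auto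
      ultimately show ?thesis
        using L(2)[of n] m_le N2 by fastforce
    qed
    then show "\<exists>N. \<forall>n\<ge>N. norm (h (L n) - 0) < r"
      by (intro exI[of _ "max N1 N2"]) auto
  qed
  then show ?thesis
    using L(1) by blast
qed

section \<open>Connectedness in topological graphs\<close>

lemma gconnectedI:
  assumes "S \<subseteq> topspace T"
    and "\<And>P R. \<lbrakk>closedin (subtopology T S) P; closedin (subtopology T S) R; P \<union> R = S;
      \<forall>p\<in>P. \<forall>r\<in>R. (p, r) \<notin> E\<rbrakk> \<Longrightarrow> P = {} \<or> R = {}"
  shows "gconnected T E S"
  using assms unfolding gconnected_def gdisconnected_def by blast

lemma gconnectedD:
  assumes "gconnected T E S" "closedin (subtopology T S) P" "closedin (subtopology T S) R"
    "P \<union> R = S" "\<forall>p\<in>P. \<forall>r\<in>R. (p, r) \<notin> E"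
  shows "P = {} \<or> R = {}"
  using assms unfolding gconnected_def gdisconnected_def by blast

lemma gconnected_subset: "gconnected T E S \<Longrightarrow> S \<subseteq> topspace T"
  by (simp add: gconnected_def)

lemma gconnected_subset_side:
  assumes C: "gconnected T E C" "C \<subseteq> S"
    and PR: "closedin (subtopology T S) P" "closedin (subtopology T S) R" "P \<union> R = S"
      "\<forall>p\<in>P. \<forall>r\<in>R. (p, r) \<notin> E"
  shows "C \<inter> P = {} \<or> C \<inter> R = {}"
proof (rule gconnectedD[OF C(1)])
  have "S \<inter> P = P" "S \<inter> R = R"
    using PR(3) by blast+
  then show "closedin (subtopology T C) (C \<inter> P)" "closedin (subtopology T C) (C \<inter> R)"
    using closedin_subtopology_Int_subset[OF _ \<open>C \<subseteq> S\<close>] PR(1,2) by metis+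
  show "C \<inter> P \<union> C \<inter> R = C"
    using PR(3) \<open>C \<subseteq> S\<close> by blast
  show "\<forall>p\<in>C \<inter> P. \<forall>r\<in>C \<inter> R. (p, r) \<notin> E"
    using PR(4) by blast
qed

lemma gconnected_pair:
  assumes "{x, y} \<subseteq> topspace T" "{x, y} \<times> {x, y} \<subseteq> E"
  shows "gconnected T E {x, y}"
proof (rule gconnectedI[OF assms(1)])
  fix P R assume "P \<union> R = {x, y}" "\<forall>p\<in>P. \<forall>r\<in>R. (p, r) \<notin> E"
  then show "P = {} \<or> R = {}"
    using assms(2) by (metis Un_iff all_not_in_conv mem_Sigma_iff subsetD)
qed

lemma gconnected_Union:
  assumes \<S>: "\<And>S. S \<in> \<S> \<Longrightarrow> gconnected T E S \<and> x \<in> S"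
  shows "gconnected T E (\<Union>\<S>)"
proof (rule gconnectedI)
  show "\<Union>\<S> \<subseteq> topspace T"
    using \<S> gconnected_subset by blast
  fix P R assume PR: "closedin (subtopology T (\<Union>\<S>)) P" "closedin (subtopology T (\<Union>\<S>)) R"
    "P \<union> R = \<Union>\<S>" "\<forall>p\<in>P. \<forall>r\<in>R. (p, r) \<notin> E"
  have side: "S \<inter> P = {} \<or> S \<inter> R = {}" if "S \<in> \<S>" for S
    using gconnected_subset_side[OF _ _ PR] \<S> that by blast
  show "P = {} \<or> R = {}"
  proof (cases "\<S> = {}")
    case False
    then have "x \<in> P \<or> x \<in> R"
      using PR(3) \<S> by blast
    then show ?thesis
      using side \<S> PR(3) by blast
  qed (use PR(3) in auto)
qed

lemma gconnected_closure:
  assumes refl: "\<And>x. x \<in> topspace T \<Longrightarrow> (x, x) \<in> E" and S: "gconnected T E S"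
  shows "gconnected T E (T closure_of S)"
proof (rule gconnectedI[OF closure_of_subset_topspace])
  fix P R assume PR: "closedin (subtopology T (T closure_of S)) P"
    "closedin (subtopology T (T closure_of S)) R" "P \<union> R = T closure_of S"
    "\<forall>p\<in>P. \<forall>r\<in>R. (p, r) \<notin> E"
  have closed: "closedin T P" "closedin T R"
    using closedin_trans_full[OF PR(1) closedin_closure_of]
      closedin_trans_full[OF PR(2) closedin_closure_of] .
  have "S \<subseteq> T closure_of S"
    using closure_of_subset[OF gconnected_subset[OF S]] .
  then have "S \<inter> P = {} \<or> S \<inter> R = {}"
    by (rule gconnected_subset_side[OF S _ PR])
  then have "S \<subseteq> R \<or> S \<subseteq> P"
    using PR(3) \<open>S \<subseteq> T closure_of S\<close> by blast
  then have "T closure_of S \<subseteq> R \<or> T closure_of S \<subseteq> P"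
    by (metis closure_of_minimal closed)
  then have "P \<subseteq> R \<or> R \<subseteq> P"
    using PR(3) by blast
  moreover have "P \<inter> R = {}"
  proof -
    have "z \<notin> R" if "z \<in> P" for z
      using that PR(4) refl closedin_subset[OF closed(1)] by blast
    then show ?thesis
      by blast
  qed
  ultimately show "P = {} \<or> R = {}"
    by blast
qed

lemma closed_gcomponent_exists:
  assumes refl: "\<And>x. x \<in> topspace T \<Longrightarrow> (x, x) \<in> E" and "closedin T W" "x \<in> W"
  obtains C where "gcomponent T E W C" "x \<in> C" "closedin T C"
proof -
  define C where "C = \<Union>{S. S \<subseteq> W \<and> x \<in> S \<and> gconnected T E S}"
  have "x \<in> topspace T"
    using assms closedin_subset by blast
  then have "gconnected T E {x}"
    using gconnected_pair[of x x T E] refl by simp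
  then have "x \<in> C"
    using \<open>x \<in> W\<close> unfolding C_def by blast
  have "gconnected T E C"
    unfolding C_def by (intro gconnected_Union) auto
  have maximal: "C' \<subseteq> C" if "C' \<subseteq> W" "x \<in> C'" "gconnected T E C'" for C'
    using that unfolding C_def by blast
  have "C \<subseteq> W"
    unfolding C_def by blast
  then have "gcomponent T E W C"
    using \<open>gconnected T E C\<close> \<open>x \<in> C\<close> maximal unfolding gcomponent_def by blast
  have "C \<subseteq> topspace T"
    using \<open>gconnected T E C\<close> gconnected_subset by blast
  moreover have "T closure_of C \<subseteq> C"
  proof (rule maximal)
    show "T closure_of C \<subseteq> W"
      using closure_of_minimal[OF \<open>C \<subseteq> W\<close> \<open>closedin T W\<close>] .
    show "x \<in> T closure_of C"
      using \<open>x \<in> C\<close> closure_of_subset[OF \<open>C \<subseteq> topspace T\<close>] by blast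
    show "gconnected T E (T closure_of C)"
      using gconnected_closure[OF refl \<open>gconnected T E C\<close>] .
  qed
  ultimately have "closedin T C"
    using closure_of_subset_eq by blast
  then show thesis
    using that \<open>gcomponent T E W C\<close> \<open>x \<in> C\<close> by blast
qed

lemma gconnected_image_discrete:
  assumes f: "continuous_map T (discrete_topology V) f"
    and hom: "\<And>x y. (x, y) \<in> E \<Longrightarrow> (f x, f y) \<in> EV"
    and S: "gconnected T E S"
  shows "gconnected (discrete_topology V) EV (f ` S)"
proof (rule gconnectedI)
  have "S \<subseteq> topspace T"
    using S gconnected_subset by blast
  then show fS: "f ` S \<subseteq> topspace (discrete_topology V)"
    using continuous_map_image_subset_topspace[OF f] by blast
  have closed: "closedin (subtopology T S) {x \<in> S. f x \<in> Z}" for Z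
  proof -
    have "closedin (discrete_topology V) (Z \<inter> V)"
      by simp
    then have "closedin T {x \<in> topspace T. f x \<in> Z \<inter> V}"
      by (rule closedin_continuous_map_preimage[OF f])
    moreover have "{x \<in> S. f x \<in> Z} = {x \<in> topspace T. f x \<in> Z \<inter> V} \<inter> S"
      using \<open>S \<subseteq> topspace T\<close> fS by auto
    ultimately show ?thesis
      unfolding closedin_subtopology by blast
  qed
  fix P R assume PR: "P \<union> R = f ` S" "\<forall>p\<in>P. \<forall>r\<in>R. (p, r) \<notin> EV"
  have "{x \<in> S. f x \<in> P} = {} \<or> {x \<in> S. f x \<in> R} = {}"
  proof (rule gconnectedD[OF S closed closed])
    show "{x \<in> S. f x \<in> P} \<union> {x \<in> S. f x \<in> R} = S"
      using PR(1) by blast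
    show "\<forall>p\<in>{x \<in> S. f x \<in> P}. \<forall>r\<in>{x \<in> S. f x \<in> R}. (p, r) \<notin> E"
      using PR(2) hom by blast
  qed
  moreover have "Z = {}" if "Z \<subseteq> f ` S" "{x \<in> S. f x \<in> Z} = {}" for Z
    using that by force
  ultimately show "P = {} \<or> R = {}"
    using PR(1) by (metis Un_upper1 Un_upper2)
qed

lemma connectedin_image_gconnected:
  assumes q: "continuous_map T X q"
    and collapse: "\<And>x y. (x, y) \<in> E \<Longrightarrow> q x = q y"
    and S: "gconnected T E S"
  shows "connectedin X (q ` S)"
  unfolding connectedin_closedin
proof (intro conjI notI)
  have "S \<subseteq> topspace T"
    using S gconnected_subset by blast
  then show "q ` S \<subseteq> topspace X"
    using continuous_map_image_subset_topspace[OF q] by blast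
  have closed: "closedin (subtopology T S) {x \<in> S. q x \<in> Z}" if "closedin X Z" for Z
  proof -
    have "{x \<in> S. q x \<in> Z} = {x \<in> topspace T. q x \<in> Z} \<inter> S"
      using \<open>S \<subseteq> topspace T\<close> by blast
    then show ?thesis
      using closedin_continuous_map_preimage[OF q that] unfolding closedin_subtopology by blast
  qed
  assume "\<exists>E1 E2. closedin X E1 \<and> closedin X E2 \<and> q ` S \<subseteq> E1 \<union> E2 \<and>
    E1 \<inter> E2 \<inter> q ` S = {} \<and> E1 \<inter> q ` S \<noteq> {} \<and> E2 \<inter> q ` S \<noteq> {}"
  then obtain E1 E2 where E12: "closedin X E1" "closedin X E2" "q ` S \<subseteq> E1 \<union> E2"
    "E1 \<inter> E2 \<inter> q ` S = {}" "E1 \<inter> q ` S \<noteq> {}" "E2 \<inter> q ` S \<noteq> {}"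
    by blast
  have "{x \<in> S. q x \<in> E1} = {} \<or> {x \<in> S. q x \<in> E2} = {}"
  proof (rule gconnectedD[OF S closed[OF E12(1)] closed[OF E12(2)]])
    show "{x \<in> S. q x \<in> E1} \<union> {x \<in> S. q x \<in> E2} = S"
      using E12(3) by blast
    show "\<forall>p\<in>{x \<in> S. q x \<in> E1}. \<forall>r\<in>{x \<in> S. q x \<in> E2}. (p, r) \<notin> E"
    proof (intro ballI notI)
      fix p r assume "p \<in> {x \<in> S. q x \<in> E1}" "r \<in> {x \<in> S. q x \<in> E2}" "(p, r) \<in> E"
      then have "q p \<in> E1 \<inter> E2 \<inter> q ` S"
        using collapse by auto
      then show False
        using E12(4) by blast
    qed
  qed
  then show False
    using E12(5,6) by blast
qed

lemma gconnected_preimage_if_gconnected_fibres: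
  assumes f: "epimorphism T E (discrete_topology V) EV f"
    and E: "E \<subseteq> topspace T \<times> topspace T"
    and fibres: "\<And>v. v \<in> V \<Longrightarrow> gconnected T E {x \<in> topspace T. f x = v}"
    and Q: "gconnected (discrete_topology V) EV Q"
  shows "gconnected T E {x \<in> topspace T. f x \<in> Q}" (is "gconnected T E ?S")
proof (rule gconnectedI)
  let ?F = "\<lambda>v. {x \<in> topspace T. f x = v}"
  have "Q \<subseteq> V"
    using Q gconnected_subset by force
  show "?S \<subseteq> topspace T"
    by blast
  fix P R assume PR: "closedin (subtopology T ?S) P" "closedin (subtopology T ?S) R"
    "P \<union> R = ?S" "\<forall>p\<in>P. \<forall>r\<in>R. (p, r) \<notin> E"
  have side: "?F v \<inter> P = {} \<or> ?F v \<inter> R = {}" if "v \<in> Q" for v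
  proof (rule gconnected_subset_side[OF fibres _ PR])
    show "v \<in> V"
      using that \<open>Q \<subseteq> V\<close> by blast
    show "?F v \<subseteq> ?S"
      using that by blast
  qed
  have "{v \<in> Q. ?F v \<inter> R = {}} = {} \<or> {v \<in> Q. ?F v \<inter> P = {}} = {}"
  proof (rule gconnectedD[OF Q])
    show "{v \<in> Q. ?F v \<inter> R = {}} \<union> {v \<in> Q. ?F v \<inter> P = {}} = Q"
      using side by auto
    show "\<forall>a\<in>{v \<in> Q. ?F v \<inter> R = {}}. \<forall>b\<in>{v \<in> Q. ?F v \<inter> P = {}}. (a, b) \<notin> EV"
    proof (intro ballI notI)
      fix a b assume a: "a \<in> {v \<in> Q. ?F v \<inter> R = {}}" and b: "b \<in> {v \<in> Q. ?F v \<inter> P = {}}"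
        and "(a, b) \<in> EV"
      then obtain x y where "(x, y) \<in> E" "f x = a" "f y = b"
        using f unfolding epimorphism_def by blast
      moreover from this have "x \<in> ?F a" "y \<in> ?F b"
        using E by auto
      ultimately have "x \<in> P" "y \<in> R" "(x, y) \<in> E"
        using a b PR(3) by auto
      then show False
        using PR(4) by blast
    qed
  qed (use \<open>Q \<subseteq> V\<close> in auto)
  moreover have "f p \<in> {v \<in> Q. ?F v \<inter> R = {}}" if "p \<in> P" for p
    using that side[of "f p"] PR(3) by auto
  moreover have "f r \<in> {v \<in> Q. ?F v \<inter> P = {}}" if "r \<in> R" for r
    using that side[of "f r"] PR(3) by auto
  ultimately show "P = {} \<or> R = {}"
    by blast
qed

lemma confluent_if_gconnected_preimages:
  assumes f: "epimorphism T1 E1 T2 E2 f"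
    and preimages: "\<And>Q. gconnected T2 E2 Q \<Longrightarrow> gconnected T1 E1 {x \<in> topspace T1. f x \<in> Q}"
  shows "confluent T1 E1 T2 E2 f"
  unfolding confluent_def
proof (intro conjI allI impI f)
  fix Q C assume QC: "gconnected T2 E2 Q \<and> gcomponent T1 E1 {x \<in> topspace T1. f x \<in> Q} C"
  then have "gconnected T1 E1 {x \<in> topspace T1. f x \<in> Q}"
    using preimages by blast
  then have "C = {x \<in> topspace T1. f x \<in> Q}"
    using QC unfolding gcomponent_def by blast
  moreover have "Q \<subseteq> f ` topspace T1"
    using QC f gconnected_subset unfolding epimorphism_def by blast
  ultimately show "f ` C = Q"
    by blast
qed

lemma gconnected_epimorphic_image_partition:
  assumes V: "gconnected (discrete_topology V) EV V"
    and f: "epimorphism T E (discrete_topology V) EV f" and E: "E \<subseteq> topspace T \<times> topspace T"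
    and PR: "P \<union> R = topspace T" "\<forall>p\<in>P. \<forall>r\<in>R. (p, r) \<notin> E"
    and separated: "\<And>p r. \<lbrakk>p \<in> P; r \<in> R\<rbrakk> \<Longrightarrow> f p \<noteq> f r"
  shows "P = {} \<or> R = {}"
proof -
  have "f ` topspace T = V"
    using f by (simp add: epimorphism_def)
  have "f ` P = {} \<or> f ` R = {}"
  proof (rule gconnectedD[OF V])
    show "closedin (subtopology (discrete_topology V) V) (f ` P)"
      "closedin (subtopology (discrete_topology V) V) (f ` R)"
      using \<open>f ` topspace T = V\<close> PR(1) by auto
    show "f ` P \<union> f ` R = V"
      using \<open>f ` topspace T = V\<close> PR(1) by auto
    show "\<forall>a\<in>f ` P. \<forall>b\<in>f ` R. (a, b) \<notin> EV"
    proof (intro ballI notI)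
      fix a b assume "a \<in> f ` P" "b \<in> f ` R" "(a, b) \<in> EV"
      then obtain p r where "p \<in> P" "a = f p" "r \<in> R" "b = f r"
        by blast
      obtain x y where xy: "(x, y) \<in> E" "f x = a" "f y = b"
        using f \<open>(a, b) \<in> EV\<close> unfolding epimorphism_def by blast
      then have "x \<in> topspace T" "y \<in> topspace T"
        using E by auto
      moreover have "x \<notin> R" "y \<notin> P"
        using separated[of p x] separated[of y r] \<open>p \<in> P\<close> \<open>r \<in> R\<close> \<open>a = f p\<close> \<open>b = f r\<close> xy(2,3)
        by auto
      ultimately have "x \<in> P" "y \<in> R"
        using PR(1) by blast+
      then show False
        using PR(2) xy(1) by blast
    qed
  qed
  then show ?thesis
    by blast
qed

lemma confluent_component_onto_image:
  assumes f: "confluent T E (discrete_topology V) EV f"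
    and refl: "\<And>x. x \<in> topspace T \<Longrightarrow> (x, x) \<in> E"
    and K: "gconnected T E K" and x: "x \<in> topspace T" "f x \<in> f ` K"
  obtains C where "gconnected T E C" "closedin T C" "x \<in> C" "f ` C = f ` K"
proof -
  have fcont: "continuous_map T (discrete_topology V) f"
    and hom: "\<And>x y. (x, y) \<in> E \<Longrightarrow> (f x, f y) \<in> EV"
    using f by (simp_all add: confluent_def epimorphism_def)
  have Q: "gconnected (discrete_topology V) EV (f ` K)"
    by (rule gconnected_image_discrete[OF fcont hom K])
  then have "closedin (discrete_topology V) (f ` K)"
    using gconnected_subset by force
  define W where "W = {y \<in> topspace T. f y \<in> f ` K}"
  have "closedin T W"
    unfolding W_def by (rule closedin_continuous_map_preimage[OF fcont \<open>closedin (discrete_topology V) (f ` K)\<close>])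
  moreover have "x \<in> W"
    using x unfolding W_def by simp
  ultimately obtain C where C: "gcomponent T E W C" "x \<in> C" "closedin T C"
    using closed_gcomponent_exists refl by metis
  have "f ` C = f ` K"
    using f C(1) Q unfolding confluent_def W_def by blast
  moreover have "gconnected T E C"
    using C(1) unfolding gcomponent_def by blast
  ultimately show thesis
    using that C(2,3) by blast
qed

lemma (in Metric_space) gconnected_if_fine_epimorphic_images:
  assumes "compact_space mtopology" "graph M E"
    and fine: "\<And>\<delta>. \<delta> > 0 \<Longrightarrow> \<exists>(V :: 'b set) EV f. gconnected (discrete_topology V) EV V \<and>
      epimorphism mtopology E (discrete_topology V) EV f \<and> (\<forall>u\<in>M. \<forall>v\<in>M. f u = f v \<longrightarrow> d u v < \<delta>)"
  shows "gconnected mtopology E M"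
proof (rule gconnectedI)
  show "M \<subseteq> topspace mtopology"
    by simp
  fix P R assume PR: "closedin (subtopology mtopology M) P" "closedin (subtopology mtopology M) R"
    "P \<union> R = M" "\<forall>p\<in>P. \<forall>r\<in>R. (p, r) \<notin> E"
  have E: "E \<subseteq> M \<times> M" "\<And>x. x \<in> M \<Longrightarrow> (x, x) \<in> E"
    using \<open>graph M E\<close> unfolding graph_def by auto
  have "subtopology mtopology M = mtopology"
    using subtopology_topspace[of mtopology] by simp
  then have closed: "closedin mtopology P" "closedin mtopology R"
    using PR(1,2) by simp_all
  have "disjnt P R"
    using PR(3,4) E(2) by (auto simp: disjnt_def)
  then obtain \<delta> where "\<delta> > 0" and apart: "\<And>p r. \<lbrakk>p \<in> P; r \<in> R\<rbrakk> \<Longrightarrow> \<delta> \<le> d p r"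
    using mdist_bounded_below_if_disjoint_closedin[OF \<open>compact_space mtopology\<close> closed] by blast
  then obtain V :: "'b set" and EV f where V: "gconnected (discrete_topology V) EV V"
    and f: "epimorphism mtopology E (discrete_topology V) EV f"
    and fibres: "\<forall>u\<in>M. \<forall>v\<in>M. f u = f v \<longrightarrow> d u v < \<delta>"
    using fine by blast
  have separated: "f p \<noteq> f r" if "p \<in> P" "r \<in> R" for p r
  proof
    assume "f p = f r"
    moreover have "p \<in> M" "r \<in> M"
      using that PR(3) by blast+
    ultimately have "d p r < \<delta>"
      using fibres by blast
    then show False
      using apart[OF that] by linarith
  qed
  show "P = {} \<or> R = {}"
    using gconnected_epimorphic_image_partition[OF V f _ _ PR(4) separated] E(1) PR(3) by simp
qed

section \<open>Quotients by closed equivalence relations\<close>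

locale closed_equivalence = Metric_space M d for M :: "'a set" and d +
  fixes E :: "('a \<times> 'a) set"
  assumes compact: "compact_space mtopology"
    and closedin_E: "closedin (prod_topology mtopology mtopology) E"
    and equiv_E: "equiv M E"
begin

abbreviation q :: "'a \<Rightarrow> 'a set"
  where "q \<equiv> eclass M E"

abbreviation X :: "'a set topology"
  where "X \<equiv> realization mtopology E"

lemma E_subset: "E \<subseteq> M \<times> M"
  using equiv_E by (rule equivE)

lemma refl_E: "x \<in> M \<Longrightarrow> (x, x) \<in> E"
  using equiv_E by (auto elim: equivE simp: refl_on_def)

lemma eclass_eq_Image: "q x = E `` {x}"
  using E_subset by (auto simp: eclass_def)

lemma eclass_eq_iff: "\<lbrakk>x \<in> M; y \<in> M\<rbrakk> \<Longrightarrow> q x = q y \<longleftrightarrow> (x, y) \<in> E"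
  by (simp add: eclass_eq_Image eq_equiv_class_iff[OF equiv_E])

lemma eclass_eq: "(x, y) \<in> E \<Longrightarrow> q x = q y"
  using eclass_eq_iff E_subset by blast

lemma openin_X: "openin X U \<longleftrightarrow> U \<subseteq> q ` M \<and> openin mtopology {x \<in> M. q x \<in> U}"
  by (simp add: openin_realization realization_open_def)

lemma topspace_X: "topspace X = q ` M"
proof
  show "topspace X \<subseteq> q ` M"
    using openin_topspace[of X] unfolding openin_X by (rule conjunct1)
  have "{x \<in> M. q x \<in> q ` M} = M" "openin mtopology M"
    using openin_topspace[of mtopology] by auto
  then have "openin X (q ` M)"
    unfolding openin_X by simp
  then show "q ` M \<subseteq> topspace X"
    by (rule openin_subset)
qed

lemma closedin_X: "closedin X F \<longleftrightarrow> F \<subseteq> q ` M \<and> closedin mtopology {x \<in> M. q x \<in> F}"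
proof -
  have "{x \<in> M. q x \<in> q ` M - F} = M - {x \<in> M. q x \<in> F}"
    by blast
  then show ?thesis
    unfolding closedin_def[of X] closedin_def[of mtopology] topspace_X openin_X topspace_mtopology
    by simp
qed

lemma continuous_map_q: "continuous_map mtopology X q"
  unfolding continuous_map_def topspace_X by (simp add: openin_X)

text \<open>The saturation of a closed set is the projection of a closed subset of the compact
  space \<open>E\<close>, hence closed.\<close>
lemma closed_map_q: "closed_map mtopology X q"
  unfolding closed_map_def
proof (intro allI impI)
  fix C assume C: "closedin mtopology C"
  then have "C \<subseteq> M"
    using closedin_subset by force
  have "closedin (prod_topology mtopology mtopology) (E \<inter> (C \<times> M))"
    using C closedin_E by (intro closedin_Int) (auto simp: closedin_prod_Times_iff)
  then have "compactin (prod_topology mtopology mtopology) (E \<inter> (C \<times> M))"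
    using compact by (intro closedin_compact_space) (simp_all add: compact_space_prod_topology)
  then have "compactin mtopology (snd ` (E \<inter> (C \<times> M)))"
    by (rule image_compactin[OF _ continuous_map_snd])
  moreover have "{x \<in> M. q x \<in> q ` C} = snd ` (E \<inter> (C \<times> M))"
  proof
    show "{x \<in> M. q x \<in> q ` C} \<subseteq> snd ` (E \<inter> (C \<times> M))"
    proof
      fix x assume "x \<in> {x \<in> M. q x \<in> q ` C}"
      then obtain c where "c \<in> C" "x \<in> M" "q c = q x"
        by auto
      then have "(c, x) \<in> E \<inter> (C \<times> M)"
        using eclass_eq_iff \<open>C \<subseteq> M\<close> by blast
      then show "x \<in> snd ` (E \<inter> (C \<times> M))"
        by force
    qed
    show "snd ` (E \<inter> (C \<times> M)) \<subseteq> {x \<in> M. q x \<in> q ` C}"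
    proof
      fix x assume "x \<in> snd ` (E \<inter> (C \<times> M))"
      then obtain c where "(c, x) \<in> E" "c \<in> C" "x \<in> M"
        by auto
      then show "x \<in> {x \<in> M. q x \<in> q ` C}"
        using eclass_eq[of c x] by auto
    qed
  qed
  ultimately have "closedin mtopology {x \<in> M. q x \<in> q ` C}"
    using compactin_imp_closedin[OF Hausdorff_space_mtopology] by simp
  then show "closedin X (q ` C)"
    unfolding closedin_X using \<open>C \<subseteq> M\<close> by blast
qed

lemma normal_Hausdorff_X: "normal_space X \<and> Hausdorff_space X"
proof (rule normal_Hausdorff_space_closed_continuous_map_image)
  show "normal_space mtopology"
    by (simp add: metrizable_imp_normal_space metrizable_space_mtopology)
  show "q ` topspace mtopology = topspace X"
    by (simp add: topspace_X)
qed (rule Hausdorff_space_mtopology closed_map_q continuous_map_q)+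

lemma compact_space_X: "compact_space X"
proof -
  have "compactin X (q ` M)"
    using compact image_compactin[OF _ continuous_map_q] by (simp add: compact_space_def)
  then show ?thesis
    by (simp add: compact_space_def topspace_X)
qed

lemma perfect_map_q: "perfect_map mtopology X q"
  unfolding perfect_map_def proper_map_def
proof (intro conjI ballI continuous_map_q closed_map_q)
  show "q ` topspace mtopology = topspace X"
    by (simp add: topspace_X)
next
  fix u assume "u \<in> topspace X"
  then have "closedin X {u}"
    using normal_Hausdorff_X by (simp add: closedin_Hausdorff_singleton)
  then have "closedin mtopology {x \<in> topspace mtopology. q x = u}"
    using closedin_continuous_map_preimage[OF continuous_map_q] by force
  then show "compactin mtopology {x \<in> topspace mtopology. q x = u}"
    using closedin_compact_space[OF compact] by blast
qed

lemma metrizable_space_X: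
  assumes "second_countable mtopology"
  shows "metrizable_space X"
proof (rule metrizable_space_if_compact_Hausdorff_second_countable)
  show "compact_space X" "Hausdorff_space X"
    using compact_space_X normal_Hausdorff_X by simp_all
  show "second_countable X"
    by (rule second_countable_perfect_map_image[OF perfect_map_q assms])
qed

lemma gconnected_preimage:
  assumes "closedin X K" "connectedin X K"
  shows "gconnected mtopology E {x \<in> M. q x \<in> K}" (is "gconnected _ _ ?K")
proof (rule gconnectedI)
  show "?K \<subseteq> topspace mtopology"
    by auto
  have "closedin mtopology ?K"
    using assms(1) closedin_X by blast
  fix P R assume PR: "closedin (subtopology mtopology ?K) P" "closedin (subtopology mtopology ?K) R"
    "P \<union> R = ?K" "\<forall>p\<in>P. \<forall>r\<in>R. (p, r) \<notin> E"
  have "closedin mtopology P" "closedin mtopology R"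
    using closedin_trans_full[OF PR(1) \<open>closedin mtopology ?K\<close>]
      closedin_trans_full[OF PR(2) \<open>closedin mtopology ?K\<close>] .
  then have closed: "closedin X (q ` P)" "closedin X (q ` R)"
    using closed_map_q unfolding closed_map_def by blast+
  have "K \<subseteq> topspace X"
    using closedin_subset[OF assms(1)] .
  then have cover: "K \<subseteq> q ` P \<union> q ` R"
    using PR(3) unfolding topspace_X by blast
  have "q p \<noteq> q r" if "p \<in> P" "r \<in> R" for p r
  proof -
    have "p \<in> M" "r \<in> M"
      using that PR(3) by blast+
    then show ?thesis
      using eclass_eq_iff PR(4) that by blast
  qed
  then have disjoint: "q ` P \<inter> q ` R \<inter> K = {}"
    by blast
  have "q ` P \<subseteq> K" "q ` R \<subseteq> K"
    using PR(3) by blast+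
  then have "q ` P \<inter> K = {} \<or> q ` R \<inter> K = {}"
    using assms(2) closed cover disjoint unfolding connectedin_closedin by meson
  then show "P = {} \<or> R = {}"
    using \<open>q ` P \<subseteq> K\<close> \<open>q ` R \<subseteq> K\<close> by blast
qed

lemma continuum_X:
  assumes "M \<noteq> {}" "gconnected mtopology E M" "second_countable mtopology"
  shows "continuum X"
  unfolding continuum_def
proof (intro conjI)
  show "topspace X \<noteq> {}"
    using assms(1) by (simp add: topspace_X)
  have "connectedin X (q ` M)"
    using connectedin_image_gconnected[OF continuous_map_q eclass_eq assms(2)] .
  then show "connected_space X"
    by (simp add: topspace_X flip: connectedin_topspace)
qed (simp_all add: compact_space_X metrizable_space_X assms(3))

lemma subcontinuum_near_image:
  assumes \<rho>: "Metric_space (topspace X) \<rho>"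
    and f: "confluent mtopology E (discrete_topology V) EV f"
    and close: "\<And>u v. \<lbrakk>u \<in> M; v \<in> M; f u = f v\<rbrakk> \<Longrightarrow> \<rho> (q u) (q v) \<le> e"
    and K: "gconnected mtopology E K" and x: "x \<in> M" "f x \<in> f ` K"
  obtains L where "subcontinuum X L" "q x \<in> L" "\<bar>hausdist_m \<rho> L (q ` K)\<bar> \<le> e"
proof -
  obtain C where C: "gconnected mtopology E C" "closedin mtopology C" "x \<in> C" "f ` C = f ` K"
    using confluent_component_onto_image[OF f _ K] refl_E x by auto
  have "K \<subseteq> M" "C \<subseteq> M"
    using gconnected_subset[OF K] gconnected_subset[OF C(1)] by simp_all
  have "subcontinuum X (q ` C)"
    unfolding subcontinuum_def
  proof (intro conjI)
    show "q ` C \<noteq> {}"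
      using C(3) by blast
    show "compactin X (q ` C)"
      using image_compactin[OF closedin_compact_space[OF compact C(2)] continuous_map_q] .
    show "connectedin X (q ` C)"
      using connectedin_image_gconnected[OF continuous_map_q eclass_eq C(1)] .
  qed
  moreover have "\<bar>hausdist_m \<rho> (q ` C) (q ` K)\<bar> \<le> e"
  proof (rule hausdist_m_le)
    show "q ` C \<noteq> {}" "q ` K \<noteq> {}"
      using C(3) x(2) by blast+
    show "\<And>a b. 0 \<le> \<rho> a b"
      using Metric_space.nonneg[OF \<rho>] .
    show "\<exists>b\<in>q ` K. \<rho> a b \<le> e" if "a \<in> q ` C" for a
    proof -
      obtain c where "c \<in> C" "a = q c"
        using \<open>a \<in> q ` C\<close> by blast
      moreover obtain k where "k \<in> K" "f k = f c"
        using C(4) \<open>c \<in> C\<close> by (metis imageE imageI)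
      ultimately show ?thesis
        using close[of c k] \<open>C \<subseteq> M\<close> \<open>K \<subseteq> M\<close> by fastforce
    qed
    show "\<exists>a\<in>q ` C. \<rho> a b \<le> e" if "b \<in> q ` K" for b
    proof -
      obtain k where "k \<in> K" "b = q k"
        using \<open>b \<in> q ` K\<close> by blast
      moreover obtain c where "c \<in> C" "f c = f k"
        using C(4) \<open>k \<in> K\<close> by (metis imageE imageI)
      ultimately show ?thesis
        using close[of c k] \<open>C \<subseteq> M\<close> \<open>K \<subseteq> M\<close> by fastforce
    qed
  qed
  ultimately show thesis
    using that C(3) by blast
qed

lemma eventually_subcontinuum_near:
  assumes fine: "\<And>\<delta>. \<delta> > 0 \<Longrightarrow> \<exists>(V :: 'b set) EV f. confluent mtopology E (discrete_topology V) EV f \<and>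
      (\<forall>u\<in>M. \<forall>v\<in>M. f u = f v \<longrightarrow> d u v < \<delta>)"
    and \<rho>: "Metric_space (topspace X) \<rho>" "Metric_space.mtopology (topspace X) \<rho> = X"
    and K: "subcontinuum X K" "p \<in> K" and lim: "limitin X pn p sequentially" and "e > 0"
  shows "\<forall>\<^sub>F n in sequentially. \<exists>L. (subcontinuum X L \<and> pn n \<in> L) \<and> \<bar>hausdist_m \<rho> L K\<bar> \<le> e"
proof -
  have "compactin X K" "connectedin X K" "K \<subseteq> topspace X"
    using K compactin_subset_topspace unfolding subcontinuum_def by blast+
  then have "closedin X K"
    using compactin_imp_closedin normal_Hausdorff_X by blast
  define K' where "K' = {x \<in> M. q x \<in> K}"
  have K': "gconnected mtopology E K'"
    unfolding K'_def using gconnected_preimage \<open>closedin X K\<close> \<open>connectedin X K\<close> .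
  have "q ` K' = K"
    using \<open>K \<subseteq> topspace X\<close> unfolding K'_def topspace_X by blast
  have "continuous_map mtopology (Metric_space.mtopology (topspace X) \<rho>) q"
    using continuous_map_q \<rho>(2) by simp
  then obtain \<delta> where "\<delta> > 0"
    and unif: "\<And>x y. \<lbrakk>x \<in> M; y \<in> M; d x y < \<delta>\<rbrakk> \<Longrightarrow> \<rho> (q x) (q y) < e"
    using uniformly_continuous_if_compact[OF compact \<rho>(1) _ \<open>e > 0\<close>] by blast
  then obtain V :: "'b set" and EV f where f: "confluent mtopology E (discrete_topology V) EV f"
    and fibres: "\<forall>u\<in>M. \<forall>v\<in>M. f u = f v \<longrightarrow> d u v < \<delta>"
    using fine by blast
  have close: "\<rho> (q u) (q v) \<le> e" if "u \<in> M" "v \<in> M" "f u = f v" for u v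
    using unif[of u v] fibres that by fastforce
  have fcont: "continuous_map mtopology (discrete_topology V) f"
    using f by (simp add: confluent_def epimorphism_def)
  let ?B = "{x \<in> topspace mtopology. f x \<in> V - f ` K'}"
  define N where "N = topspace X - q ` ?B"
  have "closedin mtopology ?B"
    by (rule closedin_continuous_map_preimage[OF fcont]) simp
  then have "openin X N"
    unfolding N_def using closed_map_q by (simp add: closed_map_def openin_diff)
  moreover have "p \<in> N"
  proof -
    have "y \<notin> ?B" if "q y = p" for y
      using that K(2) unfolding K'_def by auto
    then show ?thesis
      using K(2) \<open>K \<subseteq> topspace X\<close> unfolding N_def by blast
  qed
  ultimately have "\<forall>\<^sub>F n in sequentially. pn n \<in> N"
    using lim unfolding limitin_def by blast
  then show ?thesis
  proof (rule eventually_mono)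
    fix n assume "pn n \<in> N"
    then obtain y where y: "y \<in> M" "q y = pn n" "y \<notin> ?B"
      unfolding N_def topspace_X by blast
    moreover have "f y \<in> V"
      using continuous_map_image_subset_topspace[OF fcont] y(1) by auto
    ultimately have "f y \<in> f ` K'"
      by auto
    then obtain L where "subcontinuum X L" "q y \<in> L" "\<bar>hausdist_m \<rho> L (q ` K')\<bar> \<le> e"
      using subcontinuum_near_image[OF \<rho>(1) f close K' y(1)] by blast
    then show "\<exists>L. (subcontinuum X L \<and> pn n \<in> L) \<and> \<bar>hausdist_m \<rho> L K\<bar> \<le> e"
      using y(2) \<open>q ` K' = K\<close> by (intro exI[of _ L]) auto
  qed
qed

lemma kelley_continuum_X:
  assumes fine: "\<And>\<delta>. \<delta> > 0 \<Longrightarrow> \<exists>(V :: 'b set) EV f. confluent mtopology E (discrete_topology V) EV f \<and>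
      (\<forall>u\<in>M. \<forall>v\<in>M. f u = f v \<longrightarrow> d u v < \<delta>)"
    and "continuum X"
  shows "kelley_continuum X"
  unfolding kelley_continuum_def
proof (intro conjI allI impI \<open>continuum X\<close>)
  fix \<rho> K p pn
  assume \<rho>: "Metric_space (topspace X) \<rho> \<and> Metric_space.mtopology (topspace X) \<rho> = X"
    and Kp: "subcontinuum X K \<and> p \<in> K \<and> range pn \<subseteq> topspace X \<and> limitin X pn p sequentially"
  have "subcontinuum X (topspace X)"
    using \<open>continuum X\<close> unfolding continuum_def subcontinuum_def
    by (simp add: compact_space_def connectedin_topspace)
  then have "\<exists>L. subcontinuum X L \<and> pn n \<in> L" for n
    using Kp by blast
  moreover have "\<forall>\<^sub>F n in sequentially. \<exists>L. (subcontinuum X L \<and> pn n \<in> L) \<and> \<bar>hausdist_m \<rho> L K\<bar> \<le> e"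
    if "e > 0" for e
    using eventually_subcontinuum_near[OF fine] \<rho> Kp that by blast
  ultimately show "\<exists>Kn. (\<forall>n. subcontinuum X (Kn n) \<and> pn n \<in> Kn n) \<and> (\<lambda>n. hausdist_m \<rho> (Kn n) K) \<longlonglongrightarrow> 0"
    using choice_tendsto_zero[of "\<lambda>n L. subcontinuum X L \<and> pn n \<in> L" "\<lambda>L. hausdist_m \<rho> L K"]
    by blast
qed

end

section \<open>Subdivided graphs\<close>

text \<open>In the subdivision of a graph every edge \<open>u \<noteq> v\<close> becomes the path
  \<open>u, (u, v), (v, u), v\<close>.\<close>

definition sd_vertex :: "nat \<Rightarrow> nat"
  where "sd_vertex u = 2 * u"

definition sd_half :: "nat \<Rightarrow> nat \<Rightarrow> nat"
  where "sd_half u v = 2 * prod_encode (u, v) + 1"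

definition sd_proj :: "nat \<Rightarrow> nat"
  where "sd_proj n = (if even n then n div 2 else fst (prod_decode (n div 2)))"

definition sd_vertices :: "nat set \<Rightarrow> (nat \<times> nat) set \<Rightarrow> nat set"
  where "sd_vertices V EV = sd_vertex ` V \<union> {sd_half u v |u v. (u, v) \<in> EV \<and> u \<noteq> v}"

definition sd_edges :: "nat set \<Rightarrow> (nat \<times> nat) set \<Rightarrow> (nat \<times> nat) set"
  where "sd_edges V EV = Id_on (sd_vertices V EV)
    \<union> {(sd_vertex u, sd_half u v) |u v. (u, v) \<in> EV \<and> u \<noteq> v}
    \<union> {(sd_half u v, sd_vertex u) |u v. (u, v) \<in> EV \<and> u \<noteq> v}
    \<union> {(sd_half u v, sd_half v u) |u v. (u, v) \<in> EV \<and> u \<noteq> v}"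

lemma sd_proj_vertex [simp]: "sd_proj (sd_vertex u) = u"
  by (simp add: sd_proj_def sd_vertex_def)

lemma sd_proj_half [simp]: "sd_proj (sd_half u v) = u"
  by (simp add: sd_proj_def sd_half_def)

lemma sd_vertex_neq_half [simp]: "sd_vertex u \<noteq> sd_half u' v'" "sd_half u' v' \<noteq> sd_vertex u"
  unfolding sd_vertex_def sd_half_def by presburger+

lemma sd_half_eq_iff [simp]: "sd_half u v = sd_half u' v' \<longleftrightarrow> u = u' \<and> v = v'"
  unfolding sd_half_def using prod_encode_eq by auto

lemma sd_edgesE:
  assumes "(n, m) \<in> sd_edges V EV"
  obtains "n = m" "n \<in> sd_vertices V EV"
  | u v where "n = sd_vertex u" "m = sd_half u v" "(u, v) \<in> EV" "u \<noteq> v"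
  | u v where "n = sd_half u v" "m = sd_vertex u" "(u, v) \<in> EV" "u \<noteq> v"
  | u v where "n = sd_half u v" "m = sd_half v u" "(u, v) \<in> EV" "u \<noteq> v"
  using assms unfolding sd_edges_def by blast

lemma sd_edge_proj_neq:
  assumes "(n, m) \<in> sd_edges V EV" "sd_proj n \<noteq> sd_proj m"
  shows "n = sd_half (sd_proj n) (sd_proj m)"
  using assms(1) by (cases rule: sd_edgesE) (use assms(2) in auto)

lemma graph_subdivision:
  assumes "graph V EV"
  shows "graph (sd_vertices V EV) (sd_edges V EV)"
proof -
  have EV: "EV \<subseteq> V \<times> V" "\<And>u v. (u, v) \<in> EV \<Longrightarrow> (v, u) \<in> EV"
    using assms unfolding graph_def by auto
  have "n \<in> sd_vertices V EV \<and> m \<in> sd_vertices V EV \<and> (m, n) \<in> sd_edges V EV"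
    if "(n, m) \<in> sd_edges V EV" for n m
    using that
  proof (cases rule: sd_edgesE)
    case 1
    then show ?thesis
      using Id_onI[of m] unfolding sd_edges_def by blast
  next
    case (2 u v)
    then show ?thesis
      using EV(1) unfolding sd_vertices_def sd_edges_def by blast
  next
    case (3 u v)
    then show ?thesis
      using EV(1) unfolding sd_vertices_def sd_edges_def by blast
  next
    case (4 u v)
    moreover have "(v, u) \<in> EV"
      using EV(2) 4(3) by blast
    ultimately show ?thesis
      unfolding sd_vertices_def sd_edges_def by blast
  qed
  moreover have "(n, n) \<in> sd_edges V EV" if "n \<in> sd_vertices V EV" for n
    using Id_onI[OF that] unfolding sd_edges_def by blast
  ultimately show ?thesis
    unfolding graph_def by (auto intro!: subrelI)
qed

lemma sd_proj_in_vertices: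
  assumes "graph V EV" "n \<in> sd_vertices V EV"
  shows "sd_proj n \<in> V"
  using assms unfolding sd_vertices_def graph_def by auto

lemma epimorphism_sd_proj:
  assumes "graph V EV"
  shows "epimorphism (discrete_topology (sd_vertices V EV)) (sd_edges V EV) (discrete_topology V) EV sd_proj"
  unfolding epimorphism_def
proof (intro conjI allI impI)
  have EV: "EV \<subseteq> V \<times> V" "\<And>u. u \<in> V \<Longrightarrow> (u, u) \<in> EV"
    using assms unfolding graph_def by auto
  show "continuous_map (discrete_topology (sd_vertices V EV)) (discrete_topology V) sd_proj"
    using sd_proj_in_vertices[OF assms] by simp
  show "(sd_proj n, sd_proj m) \<in> EV" if "(n, m) \<in> sd_edges V EV" for n m
    using that
  proof (cases rule: sd_edgesE)
    case 1
    then show ?thesis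
      using EV(2) sd_proj_in_vertices[OF assms] by simp
  qed (use EV in auto)
  have "V \<subseteq> sd_proj ` sd_vertices V EV"
  proof
    fix u assume "u \<in> V"
    then show "u \<in> sd_proj ` sd_vertices V EV"
      by (intro image_eqI[of _ _ "sd_vertex u"]) (simp_all add: sd_vertices_def)
  qed
  then show "sd_proj ` topspace (discrete_topology (sd_vertices V EV)) = topspace (discrete_topology V)"
    using sd_proj_in_vertices[OF assms] by auto
  show "\<exists>n m. (n, m) \<in> sd_edges V EV \<and> sd_proj n = a \<and> sd_proj m = b" if "(a, b) \<in> EV" for a b
  proof (cases "a = b")
    case True
    have "sd_vertex a \<in> sd_vertices V EV"
      using that EV(1) by (auto simp: sd_vertices_def)
    then have "(sd_vertex a, sd_vertex a) \<in> sd_edges V EV"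
      using Id_onI unfolding sd_edges_def by blast
    then show ?thesis
      using True by (intro exI[of _ "sd_vertex a"]) simp
  next
    case False
    then have "(sd_half a b, sd_half b a) \<in> sd_edges V EV"
      using that unfolding sd_edges_def by blast
    then show ?thesis
      by (intro exI[of _ "sd_half a b"] exI[of _ "sd_half b a"]) simp
  qed
qed

text \<open>A fibre of \<open>sd_proj\<close> is a star: an old vertex together with the half-edges at it.\<close>
lemma gconnected_sd_fibre:
  assumes "graph V EV" "u \<in> V"
  shows "gconnected (discrete_topology (sd_vertices V EV)) (sd_edges V EV)
    {n \<in> sd_vertices V EV. sd_proj n = u}"
proof -
  let ?T = "discrete_topology (sd_vertices V EV)"
  define \<S> where "\<S> = (\<lambda>n. {sd_vertex u, n}) ` {n \<in> sd_vertices V EV. sd_proj n = u}"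
  have fibre: "{n \<in> sd_vertices V EV. sd_proj n = u} = \<Union>\<S>"
  proof -
    have "sd_vertex u \<in> sd_vertices V EV"
      using assms(2) by (simp add: sd_vertices_def)
    then show ?thesis
      unfolding \<S>_def by auto
  qed
  have "gconnected ?T (sd_edges V EV) S \<and> sd_vertex u \<in> S" if S: "S \<in> \<S>" for S
  proof -
    obtain n where n: "n \<in> sd_vertices V EV" "sd_proj n = u" "S = {sd_vertex u, n}"
      using S unfolding \<S>_def by blast
    have "sd_vertex u \<in> sd_vertices V EV"
      using assms(2) by (simp add: sd_vertices_def)
    moreover have "(sd_vertex u, n) \<in> sd_edges V EV" "(n, sd_vertex u) \<in> sd_edges V EV"
      using n(1,2) unfolding sd_vertices_def sd_edges_def by auto
    ultimately have "gconnected ?T (sd_edges V EV) {sd_vertex u, n}"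
      using n(1) by (intro gconnected_pair) (auto simp: sd_edges_def)
    then show ?thesis
      using n(3) by simp
  qed
  then show ?thesis
    unfolding fibre by (rule gconnected_Union)
qed

lemma gconnected_sd_preimage:
  assumes "graph V EV" "gconnected (discrete_topology V) EV Q"
  shows "gconnected (discrete_topology (sd_vertices V EV)) (sd_edges V EV)
    {n \<in> sd_vertices V EV. sd_proj n \<in> Q}"
proof -
  have "sd_edges V EV \<subseteq> sd_vertices V EV \<times> sd_vertices V EV"
    using graph_subdivision[OF assms(1)] by (simp add: graph_def)
  then show ?thesis
    using gconnected_preimage_if_gconnected_fibres[OF epimorphism_sd_proj[OF assms(1)]]
      gconnected_sd_fibre[OF assms(1)] assms(2) by simp
qed

lemma confluent_sd_proj:
  assumes "graph V EV"
  shows "confluent (discrete_topology (sd_vertices V EV)) (sd_edges V EV) (discrete_topology V) EV sd_proj"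
  using confluent_if_gconnected_preimages[OF epimorphism_sd_proj[OF assms]]
    gconnected_sd_preimage[OF assms] by simp

lemma in_G_subdivision:
  assumes "in_G V EV"
  shows "in_G (sd_vertices V EV) (sd_edges V EV)"
  unfolding in_G_def
proof (intro conjI)
  have G: "graph V EV" "finite V" "V \<noteq> {}" "gconnected (discrete_topology V) EV V"
    using assms by (simp_all add: in_G_def)
  have "finite EV"
    using G(1,2) finite_subset unfolding graph_def by blast
  then have "finite {sd_half u v |u v. (u, v) \<in> EV \<and> u \<noteq> v}"
    by (rule finite_subset[rotated, OF finite_imageI[of _ "\<lambda>(u, v). sd_half u v"]]) force
  then show "finite (sd_vertices V EV)"
    using G(2) by (simp add: sd_vertices_def)
  show "sd_vertices V EV \<noteq> {}"
    using G(3) by (simp add: sd_vertices_def)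
  show "graph (sd_vertices V EV) (sd_edges V EV)"
    using graph_subdivision[OF G(1)] .
  have "{n \<in> sd_vertices V EV. sd_proj n \<in> V} = sd_vertices V EV"
    using sd_proj_in_vertices[OF G(1)] by blast
  then show "gconnected (discrete_topology (sd_vertices V EV)) (sd_edges V EV) (sd_vertices V EV)"
    using gconnected_sd_preimage[OF G(1,4)] by simp
qed

section \<open>The Fraisse limit\<close>

lemma fraisse_limit_G_fine:
  assumes "fraisse_limit_G M d E" "\<delta> > 0"
  obtains V EV f where "in_G V EV" "confluent (Metric_space.mtopology M d) E (discrete_topology V) EV f"
    "\<And>u v. \<lbrakk>u \<in> M; v \<in> M; f u = f v\<rbrakk> \<Longrightarrow> d u v < \<delta>"
proof -
  have "Metric_space M d" "compact_space (Metric_space.mtopology M d)"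
    using assms(1) by (simp_all add: fraisse_limit_G_def topological_graph_def)
  then interpret Metric_space M d
    by simp
  obtain V EV f where V: "in_G V EV" and f: "confluent mtopology E (discrete_topology V) EV f"
    and mesh: "\<forall>a\<in>V. mdiam d {x \<in> M. f x = a} < \<delta>"
    using assms unfolding fraisse_limit_G_def by blast
  have "f ` M = V"
    using f by (simp add: confluent_def epimorphism_def)
  have "mbounded M"
    using compactin_imp_mbounded[of M] \<open>compact_space mtopology\<close> by (simp add: compact_space_def)
  have "d u v < \<delta>" if "u \<in> M" "v \<in> M" "f u = f v" for u v
  proof -
    have "d u v \<le> mdiam d {x \<in> M. f x = f u}"
      using mdist_le_mdiam[OF mbounded_subset[OF \<open>mbounded M\<close>]] that by auto
    also have "\<dots> < \<delta>"
      using mesh \<open>f ` M = V\<close> that(1) by blast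
    finally show ?thesis .
  qed
  then show thesis
    using that V f by blast
qed

lemma fraisse_limit_G_trans:
  assumes fl: "fraisse_limit_G M d E" and xy: "(x, y) \<in> E" and yz: "(y, z) \<in> E"
  shows "(x, z) \<in> E"
proof (rule ccontr)
  assume "(x, z) \<notin> E"
  have "Metric_space M d" "graph M E"
    using fl by (simp_all add: fraisse_limit_G_def topological_graph_def)
  then interpret Metric_space M d
    by simp
  have "x \<in> M" "y \<in> M" "z \<in> M"
    using xy yz \<open>graph M E\<close> unfolding graph_def by auto
  moreover have "x \<noteq> y" "y \<noteq> z" "x \<noteq> z"
    using \<open>(x, z) \<notin> E\<close> xy yz \<open>graph M E\<close> \<open>x \<in> M\<close> unfolding graph_def by auto
  ultimately have pos: "d x y > 0" "d y z > 0" "d x z > 0"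
    by simp_all
  define \<delta> where "\<delta> = min (d x y) (min (d y z) (d x z))"
  have "\<delta> > 0"
    using pos by (simp add: \<delta>_def)
  then obtain V EV f where V: "in_G V EV" and f: "confluent mtopology E (discrete_topology V) EV f"
    and fibres: "\<And>u v. \<lbrakk>u \<in> M; v \<in> M; f u = f v\<rbrakk> \<Longrightarrow> d u v < \<delta>"
    using fraisse_limit_G_fine[OF fl] by blast
  have "f x \<noteq> f y" "f y \<noteq> f z" "f x \<noteq> f z"
    using fibres \<open>x \<in> M\<close> \<open>y \<in> M\<close> \<open>z \<in> M\<close> unfolding \<delta>_def by fastforce+
  have G: "graph V EV"
    using V by (simp add: in_G_def)
  obtain h where h: "confluent mtopology E (discrete_topology (sd_vertices V EV)) (sd_edges V EV) h"
    and lift: "\<forall>w\<in>M. f w = sd_proj (h w)"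
    using fl V in_G_subdivision[OF V] f confluent_sd_proj[OF G] unfolding fraisse_limit_G_def by blast
  have "(h y, h x) \<in> sd_edges V EV" "(h y, h z) \<in> sd_edges V EV"
    using h xy yz graph_subdivision[OF G]
    unfolding confluent_def epimorphism_def graph_def by blast+
  then have "h y = sd_half (sd_proj (h y)) (sd_proj (h x))" "h y = sd_half (sd_proj (h y)) (sd_proj (h z))"
    using sd_edge_proj_neq lift \<open>f x \<noteq> f y\<close> \<open>f y \<noteq> f z\<close> \<open>x \<in> M\<close> \<open>y \<in> M\<close> \<open>z \<in> M\<close> by metis+
  then have "sd_proj (h x) = sd_proj (h z)"
    by (metis sd_half_eq_iff)
  then show False
    using lift \<open>f x \<noteq> f z\<close> \<open>x \<in> M\<close> \<open>z \<in> M\<close> by simp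
qed

lemma fraisse_limit_G_equiv:
  assumes "fraisse_limit_G M d E"
  shows "equiv M E"
proof (rule equivI)
  have "graph M E"
    using assms by (simp add: fraisse_limit_G_def topological_graph_def)
  then show "E \<subseteq> M \<times> M" "refl_on M E" "sym E"
    unfolding graph_def refl_on_def sym_def by auto
  show "trans E"
    using fraisse_limit_G_trans[OF assms] by (rule transI)
qed

theorem mainTheorem3:
  fixes M :: "'a set" and d :: "'a \<Rightarrow> 'a \<Rightarrow> real" and E :: "('a \<times> 'a) set"
  assumes "fraisse_limit_G M d E"
  shows "kelley_continuum (realization (Metric_space.mtopology M d) E)"
proof -
  have tg: "topological_graph M d E"
    using assms by (simp add: fraisse_limit_G_def)
  then interpret closed_equivalence M d E
    using fraisse_limit_G_equiv[OF assms]
    by (intro closed_equivalence.intro closed_equivalence_axioms.intro) (simp_all add: topological_graph_def)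
  have fine: "\<exists>V EV f. in_G V EV \<and> confluent mtopology E (discrete_topology V) EV f \<and>
      (\<forall>u\<in>M. \<forall>v\<in>M. f u = f v \<longrightarrow> d u v < \<delta>)" if "\<delta> > 0" for \<delta>
    using fraisse_limit_G_fine[OF assms that] by metis
  obtain V EV f where "in_G V EV" "confluent mtopology E (discrete_topology V) EV f"
    using fine[of 1] by auto
  then have "M \<noteq> {}"
    unfolding in_G_def confluent_def epimorphism_def by auto
  moreover have "gconnected mtopology E M"
    using gconnected_if_fine_epimorphic_images[OF compact] tg fine
    unfolding topological_graph_def in_G_def confluent_def by metis
  ultimately have "continuum X"
    using continuum_X tg by (simp add: topological_graph_def)
  then show ?thesis
    using kelley_continuum_X fine by blast
qed

end
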